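(* Let $b\in\mathcal E_1$ with $b-1$ flat at $0$, let $\theta$ be the inverse germ of $t\mapsto t\,b(t)$, write $\theta(x)=x\,c(x)$, and let $\sigma(x)=\theta(x)^4$, $\sigma^n$ its $n$-th iterate ($\sigma^0=\mathrm{id}$). Then the product $\Big(\prod_{n=0}^{\infty}c(\sigma^n(x))^{1/4^n}\Big)^{1/2}$ converges uniformly on some neighbourhood of $0$.
   Context: $\mathcal E_1$ denotes the ring of smooth function germs at $0\in\mathbb R$. A germ is flat at $0$ if all its derivatives (including its value) vanish at $0$. *)

theory Defs
  imports "HOL-Analysis.Analysis"
begin

text \<open>A real function represents a germ in E_1 (smooth germ at 0) if it is C-infinity
on some open neighbourhood of 0: every iterated derivative is differentiable there.\<close>
definition smooth_germ :: "(real \<Rightarrow> real) \<Rightarrow> bool" where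
  "smooth_germ f \<longleftrightarrow>
     (\<exists>U. open U \<and> 0 \<in> U \<and> (\<forall>n. \<forall>x\<in>U. (deriv ^^ n) f differentiable (at x)))"

definition flat_at_0 :: "(real \<Rightarrow> real) \<Rightarrow> bool" where
  "flat_at_0 f \<longleftrightarrow> (\<forall>n. (deriv ^^ n) f 0 = 0)"

end

theory Submission
  imports Defs
begin

text \<open>From \<open>\<theta> x \<cdot> b (\<theta> x) = x\<close> and \<open>\<theta> x = x \<cdot> c x\<close> we get \<open>c x \<cdot> b (\<theta> x) = 1\<close> for \<open>x \<noteq> 0\<close>,
  and \<open>b 0 = 1\<close> forces \<open>c 0 = 1\<close>. Hence on a small ball \<open>U\<close> around 0 the factor \<open>c\<close> stays in
  \<open>[1/2, 3/2]\<close> and \<open>\<sigma> = \<theta>\<^sup>4\<close> maps \<open>U\<close> into itself. Taking logarithms, the product becomes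
  \<open>exp (1/2 \<cdot> \<Sum>n. ln (c (\<sigma>\<^sup>n x)) / 4\<^sup>n)\<close>, whose series is dominated by \<open>\<Sum>n. ln 2 / 4\<^sup>n\<close>, so the
  Weierstrass M-test gives uniform convergence.\<close>

lemma isCont_smooth_germ_0:
  assumes "smooth_germ f"
  shows "isCont f 0"
proof -
  from assms obtain U where "0 \<in> U" "\<forall>n. \<forall>x\<in>U. (deriv ^^ n) f differentiable (at x)"
    unfolding smooth_germ_def by blast
  then have "f differentiable (at 0)" by (metis funpow_0)
  then show ?thesis by (rule differentiable_imp_continuous_within)
qed

lemma flat_at_0_imp_zero: "flat_at_0 f \<Longrightarrow> f 0 = 0"
  unfolding flat_at_0_def by (metis funpow_0)

lemma funpow_closed:
  assumes "\<And>x. x \<in> S \<Longrightarrow> f x \<in> S" and "x \<in> S"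
  shows "(f ^^ n) x \<in> S"
  by (induction n) (use assms in auto)

lemma abs_ln_le_max:
  fixes m y M :: real
  assumes "0 < m" "m \<le> y" "y \<le> M"
  shows "\<bar>ln y\<bar> \<le> max \<bar>ln m\<bar> \<bar>ln M\<bar>"
proof -
  have "0 < y" using assms by linarith
  then have "ln m \<le> ln y" "ln y \<le> ln M" using assms by simp_all
  then show ?thesis by linarith
qed

lemma inverse_germ_factor_0_eq_1:
  fixes b \<theta> c :: "real \<Rightarrow> real"
  assumes "isCont b 0" "isCont c 0" "b 0 = 1"
    and inv: "\<forall>\<^sub>F x in nhds 0. \<theta> x * b (\<theta> x) = x"
    and factor: "\<forall>\<^sub>F x in nhds 0. \<theta> x = x * c x"
  shows "c 0 = 1"
proof -
  have "((\<lambda>x. x * c x) \<longlongrightarrow> 0) (at 0)"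
    using tendsto_mult[OF tendsto_ident_at \<open>isCont c 0\<close>[unfolded isCont_def]] by simp
  then have "(\<theta> \<longlongrightarrow> 0) (at 0)"
    by (rule Lim_transform_eventually) (use factor in \<open>auto simp: eventually_at_filter elim: eventually_mono\<close>)
  then have "((\<lambda>x. b (\<theta> x)) \<longlongrightarrow> b 0) (at 0)"
    by (rule isCont_tendsto_compose[OF \<open>isCont b 0\<close>])
  then have "((\<lambda>x. c x * b (\<theta> x)) \<longlongrightarrow> c 0 * b 0) (at 0)"
    using \<open>isCont c 0\<close> by (intro tendsto_mult) (simp_all add: isCont_def)
  moreover have "\<forall>\<^sub>F x in at 0. c x * b (\<theta> x) = 1"
  proof -
    have "\<forall>\<^sub>F x in at 0. x \<noteq> 0 \<and> \<theta> x = x * c x \<and> \<theta> x * b (\<theta> x) = x"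
      using eventually_conj[OF factor inv] unfolding eventually_at_filter
      by (auto elim: eventually_mono)
    then show ?thesis by eventually_elim (metis mult.assoc mult_cancel_left1)
  qed
  then have "((\<lambda>x. c x * b (\<theta> x)) \<longlongrightarrow> 1) (at 0)"
    by (rule tendsto_eventually)
  ultimately show ?thesis
    using \<open>b 0 = 1\<close> tendsto_unique[OF trivial_limit_at] by fastforce
qed

lemma abs_power4_mult_le:
  fixes x y :: real
  assumes "\<bar>x\<bar> \<le> 1/2" "\<bar>y\<bar> \<le> 3/2"
  shows "\<bar>(x * y) ^ 4\<bar> \<le> \<bar>x\<bar>"
proof -
  have "(x * y) ^ 4 = x * (x ^ 3 * y ^ 4)" by algebra
  then have "\<bar>(x * y) ^ 4\<bar> = \<bar>x\<bar> * (\<bar>x\<bar> ^ 3 * \<bar>y\<bar> ^ 4)"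
    by (simp only: abs_mult power_abs)
  also have "\<dots> \<le> \<bar>x\<bar> * ((1/2) ^ 3 * (3/2) ^ 4)"
    using assms by (intro mult_left_mono mult_mono power_mono) auto
  also have "\<dots> \<le> \<bar>x\<bar>" by (simp add: eval_nat_numeral)
  finally show ?thesis .
qed

lemma uniform_limit_prod_powr:
  fixes a :: "nat \<Rightarrow> 'a \<Rightarrow> real" and w :: "nat \<Rightarrow> real" and m M p :: real
  assumes bounds: "\<And>n x. x \<in> U \<Longrightarrow> m \<le> a n x \<and> a n x \<le> M" and "0 < m"
    and summable_w: "summable (\<lambda>n. \<bar>w n\<bar>)"
  shows "\<exists>g. uniform_limit U (\<lambda>N x. (\<Prod>n<N. a n x powr w n) powr p) g sequentially"
proof -
  define L where "L = max \<bar>ln m\<bar> \<bar>ln M\<bar>"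
  define f where "f n x = w n * ln (a n x)" for n x
  have pos: "a n x > 0" if "x \<in> U" for n x
    using bounds[OF that, of n] \<open>0 < m\<close> by linarith
  have f_le: "norm (f n x) \<le> \<bar>w n\<bar> * L" if "x \<in> U" for n x
    unfolding f_def L_def real_norm_def abs_mult
    using bounds[OF that, of n] \<open>0 < m\<close> by (intro mult_left_mono abs_ln_le_max) auto
  have summable_M: "summable (\<lambda>n. \<bar>w n\<bar> * L)"
    using summable_w by (rule summable_mult2)
  have sums: "uniform_limit U (\<lambda>N x. \<Sum>n<N. f n x) (\<lambda>x. \<Sum>n. f n x) sequentially"
    by (rule Weierstrass_m_test[OF f_le summable_M])
  define R where "R = (\<Sum>n. \<bar>w n\<bar> * L)"
  have sums_bounded: "(\<Sum>n<N. f n x) \<in> cball 0 R" if "x \<in> U" for N x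
  proof -
    have "\<bar>\<Sum>n<N. f n x\<bar> \<le> (\<Sum>n<N. \<bar>w n\<bar> * L)"
      by (rule order_trans[OF sum_abs sum_mono]) (use f_le[OF that] in simp)
    also have "\<dots> \<le> R"
      unfolding R_def using summable_M by (intro sum_le_suminf) (auto simp: L_def)
    finally show ?thesis by simp
  qed
  have "uniformly_continuous_on (cball 0 R) (\<lambda>s. exp (p * s))"
    by (intro compact_uniformly_continuous continuous_intros) auto
  then have exps: "uniform_limit U (\<lambda>N x. exp (p * (\<Sum>n<N. f n x))) (\<lambda>x. exp (p * (\<Sum>n. f n x)))
      sequentially"
    by (rule uniform_limit_compose_uniformly_continuous_on[OF sums]) (use sums_bounded in auto)
  have "(\<Prod>n<N. a n x powr w n) powr p = exp (p * (\<Sum>n<N. f n x))" if "x \<in> U" for N x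
  proof -
    have "(\<Prod>n<N. a n x powr w n) = exp (\<Sum>n<N. f n x)"
      using pos[OF that] by (simp add: exp_sum powr_def f_def less_imp_neq[symmetric])
    then show ?thesis by (simp add: powr_def)
  qed
  then show ?thesis
    using exps by (intro exI) (subst uniform_limit_cong'; auto)
qed

lemma invariant_neighbourhood:
  fixes \<theta> c :: "real \<Rightarrow> real"
  assumes "isCont c 0" "c 0 = 1"
    and factor: "\<forall>\<^sub>F x in nhds 0. \<theta> x = x * c x"
  obtains U where "open U" "0 \<in> U"
    and "\<And>x. x \<in> U \<Longrightarrow> 1/2 \<le> c x \<and> c x \<le> 3/2"
    and "\<And>x. x \<in> U \<Longrightarrow> \<theta> x ^ 4 \<in> U"
proof -
  have "(c \<longlongrightarrow> c 0) (nhds 0)"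
    using \<open>isCont c 0\<close> by (simp only: isCont_def tendsto_at_iff_tendsto_nhds)
  then have "\<forall>\<^sub>F x in nhds 0. dist (c x) 1 < 1/2"
    using \<open>c 0 = 1\<close> by (intro tendstoD) simp_all
  with factor have "\<forall>\<^sub>F x in nhds 0. \<theta> x = x * c x \<and> dist (c x) 1 < 1/2"
    by (rule eventually_conj)
  then obtain d where "d > 0" and d: "\<And>x. dist x 0 < d \<Longrightarrow> \<theta> x = x * c x \<and> dist (c x) 1 < 1/2"
    unfolding eventually_nhds_metric by blast
  define U where "U = ball (0::real) (min d (1/2))"
  have in_U: "\<theta> x = x * c x \<and> 1/2 \<le> c x \<and> c x \<le> 3/2 \<and> \<bar>x\<bar> < 1/2" if "x \<in> U" for x
    using d[of x] that by (auto simp: U_def dist_real_def abs_if split: if_splits)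
  have "\<theta> x ^ 4 \<in> U" if "x \<in> U" for x
    using in_U[OF that] abs_power4_mult_le[of x "c x"] that by (auto simp: U_def)
  moreover have "open U" "0 \<in> U" using \<open>d > 0\<close> by (auto simp: U_def)
  ultimately show ?thesis using in_U that by blast
qed

theorem lemma3p9:
  fixes b \<theta> c :: "real \<Rightarrow> real"
  assumes b_smooth: "smooth_germ b"
    and b_flat: "flat_at_0 (\<lambda>t. b t - 1)"
    and inv1: "\<forall>\<^sub>F t in nhds 0. \<theta> (t * b t) = t"
    and inv2: "\<forall>\<^sub>F x in nhds 0. \<theta> x * b (\<theta> x) = x"
    and c_smooth: "smooth_germ c"
    and theta_c: "\<forall>\<^sub>F x in nhds 0. \<theta> x = x * c x"
  shows "\<exists>U. open U \<and> 0 \<in> U \<and> (\<exists>g.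
           uniform_limit U
             (\<lambda>N x. (\<Prod>n<N. c (((\<lambda>y. (\<theta> y) ^ 4) ^^ n) x) powr (1 / 4 ^ n)) powr (1/2))
             g sequentially)"
proof -
  have c_cont: "isCont c 0" by (rule isCont_smooth_germ_0[OF c_smooth])
  have "b 0 = 1" using flat_at_0_imp_zero[OF b_flat] by simp
  with isCont_smooth_germ_0[OF b_smooth] c_cont have "c 0 = 1"
    using inv2 theta_c by (rule inverse_germ_factor_0_eq_1)
  obtain U where U: "open U" "0 \<in> U"
    and c_bounds: "\<And>x. x \<in> U \<Longrightarrow> 1/2 \<le> c x \<and> c x \<le> 3/2"
    and \<sigma>_into_U: "\<And>x. x \<in> U \<Longrightarrow> \<theta> x ^ 4 \<in> U"
    using invariant_neighbourhood[OF c_cont \<open>c 0 = 1\<close> theta_c] by blast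
  have bounds: "1/2 \<le> c (((\<lambda>y. \<theta> y ^ 4) ^^ n) x) \<and> c (((\<lambda>y. \<theta> y ^ 4) ^^ n) x) \<le> 3/2"
    if "x \<in> U" for n x
    using c_bounds funpow_closed[of U "\<lambda>y. \<theta> y ^ 4", OF \<sigma>_into_U that] by blast
  have summable_weights: "summable (\<lambda>n. \<bar>1 / 4 ^ n :: real\<bar>)"
    by (simp add: summable_geometric power_one_over[symmetric])
  have "\<exists>g. uniform_limit U
      (\<lambda>N x. (\<Prod>n<N. c (((\<lambda>y. (\<theta> y) ^ 4) ^^ n) x) powr (1 / 4 ^ n)) powr (1/2)) g sequentially"
    using uniform_limit_prod_powr[OF bounds _ summable_weights] by simp
  with U show ?thesis by blast
qed

end
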